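(* Let $X$ be a simple abelian variety over $\mathbb{C}$ and let $n \ge 2$ be an integer. Let $F$ be an automorphism of the abelian variety $X^n$ (a group automorphism, i.e. preserving $0$). Then $F$ satisfies the symmetric condition if and only if \[ F = \sigma \circ \begin{pmatrix} f & g & \cdots & g \\ g & f & \ddots & \vdots \\ \vdots & \ddots & \ddots & g \\ g & \cdots & g & f \end{pmatrix} \] for some permutation $\sigma \in \mathfrak{S}_n$ (acting on $X^n$ by permuting the factors, i.e. as a permutation matrix) and some $f, g \in \operatorname{End}(X)$, where the matrix has $f$ on the diagonal and $g$ in every off-diagonal entry.
   Context: All work is over $\mathbb{C}$. Automorphisms and endomorphisms of abelian varieties are taken to be group homomorphisms (preserving $0$); $\operatorname{End}(X)$ is the endomorphism ring of $X$. An abelian variety is simple if it has no nontrivial abelian subvariety. Every endomorphism $F$ of $X^n$ is written as a matrix $(f_{ij})$ with $f_{ij} \in \operatorname{End}(X)$, where $F(x_1,\dots,x_n)_i = \sum_j f_{ij}(x_j)$. The symmetric product $X^{(n)}$ is the quotient of $X^n$ by the permutation action of the symmetric group $\mathfrak{S}_n$, and $\rho\colon X^n \to X^{(n)}$ is the quotient map. An automorphism $F$ of $X^n$ satisfies the symmetric condition if there exists an automorphism $\tau$ of $X^{(n)}$ with $\tau \circ \rho = \rho \circ F$. *)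

theory Defs
  imports "HOL-Analysis.Analysis" "HOL-Combinatorics.Permutations"
begin

text \<open>A complex abelian variety of dimension g is modelled analytically as a complex torus
  C^g / L (L a lattice) admitting a Riemann form (Riemann's criterion).  Endomorphisms are
  represented by their analytic representations: complex g x g matrices A with A L \<subseteq> L.\<close>

definition is_lattice :: "(complex^'g::finite) set \<Rightarrow> bool" where
  "is_lattice L \<longleftrightarrow> (\<exists>B. finite B \<and> card B = 2 * CARD('g) \<and> independent B \<and>
      L = {v. \<exists>k :: complex^'g \<Rightarrow> int. v = (\<Sum>b\<in>B. of_int (k b) *\<^sub>R b)})"

definition herm :: "complex^'g::finite^'g \<Rightarrow> complex^'g \<Rightarrow> complex^'g \<Rightarrow> complex" where
  "herm H x y = (\<Sum>i\<in>UNIV. \<Sum>j\<in>UNIV. x$i * H$i$j * cnj (y$j))"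

definition is_abelian_variety :: "(complex^'g::finite) set \<Rightarrow> bool" where
  "is_abelian_variety L \<longleftrightarrow> is_lattice L \<and>
     (\<exists>H. (\<forall>i j. H$j$i = cnj (H$i$j)) \<and> (\<forall>x. x \<noteq> 0 \<longrightarrow> Re (herm H x x) > 0) \<and>
          (\<forall>x\<in>L. \<forall>y\<in>L. Im (herm H x y) \<in> \<int>))"

definition complex_subspace :: "(complex^'g::finite) set \<Rightarrow> bool" where
  "complex_subspace W \<longleftrightarrow> 0 \<in> W \<and> (\<forall>x\<in>W. \<forall>y\<in>W. x + y \<in> W) \<and> (\<forall>c x. x \<in> W \<longrightarrow> c *s x \<in> W)"

text \<open>Abelian subvarieties of C^g/L correspond to complex subspaces W with W \<inter> L a lattice in W,
  i.e. W \<inter> L spans W over R.\<close>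
definition simple_av :: "(complex^'g::finite) set \<Rightarrow> bool" where
  "simple_av L \<longleftrightarrow> is_abelian_variety L \<and>
     \<not> (\<exists>W. complex_subspace W \<and> W \<noteq> {0} \<and> W \<noteq> UNIV \<and> span (W \<inter> L) = W)"

definition End_AV :: "(complex^'g::finite) set \<Rightarrow> (complex^'g^'g) set" where
  "End_AV L = {A. \<forall>v\<in>L. A *v v \<in> L}"

text \<open>Endomorphisms of X^n as n x n matrices of endomorphisms of X.\<close>
definition mat_app :: "('n::finite \<Rightarrow> 'n \<Rightarrow> complex^'g::finite^'g) \<Rightarrow> ('n \<Rightarrow> complex^'g) \<Rightarrow> ('n \<Rightarrow> complex^'g)" where
  "mat_app F x = (\<lambda>i. \<Sum>j\<in>UNIV. F i j *v x j)"

definition mat_comp :: "('n::finite \<Rightarrow> 'n \<Rightarrow> complex^'g::finite^'g) \<Rightarrow> ('n \<Rightarrow> 'n \<Rightarrow> complex^'g^'g) \<Rightarrow> ('n \<Rightarrow> 'n \<Rightarrow> complex^'g^'g)" where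
  "mat_comp F G = (\<lambda>i j. \<Sum>k\<in>UNIV. F i k ** G k j)"

definition mat_id :: "'n \<Rightarrow> 'n \<Rightarrow> complex^'g::finite^'g" where
  "mat_id = (\<lambda>i j. if i = j then mat 1 else 0)"

definition is_End_pow :: "(complex^'g::finite) set \<Rightarrow> ('n \<Rightarrow> 'n \<Rightarrow> complex^'g^'g) \<Rightarrow> bool" where
  "is_End_pow L F \<longleftrightarrow> (\<forall>i j. F i j \<in> End_AV L)"

definition is_Aut_pow :: "(complex^'g::finite) set \<Rightarrow> ('n::finite \<Rightarrow> 'n \<Rightarrow> complex^'g^'g) \<Rightarrow> bool" where
  "is_Aut_pow L F \<longleftrightarrow> is_End_pow L F \<and>
     (\<exists>G. is_End_pow L G \<and> mat_comp F G = mat_id \<and> mat_comp G F = mat_id)"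

text \<open>Points of X^n are tuples in (C^g)^n modulo L^n; the symmetric product X^(n) is the quotient
  by "equal modulo L after a permutation of the factors".\<close>
definition sym_rel :: "(complex^'g::finite) set \<Rightarrow> (('n \<Rightarrow> complex^'g) \<times> ('n \<Rightarrow> complex^'g)) set" where
  "sym_rel L = {(x, y). \<exists>\<pi>. \<pi> permutes (UNIV :: 'n set) \<and> (\<forall>i. x (\<pi> i) - y i \<in> L)}"

definition sym_prod :: "(complex^'g::finite) set \<Rightarrow> ('n \<Rightarrow> complex^'g) set set" where
  "sym_prod L = UNIV // sym_rel L"

definition rho :: "(complex^'g::finite) set \<Rightarrow> ('n \<Rightarrow> complex^'g) \<Rightarrow> ('n \<Rightarrow> complex^'g) set" where
  "rho L x = sym_rel L `` {x}"

definition symmetric_condition :: "(complex^'g::finite) set \<Rightarrow> ('n::finite \<Rightarrow> 'n \<Rightarrow> complex^'g^'g) \<Rightarrow> bool" where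
  "symmetric_condition L F \<longleftrightarrow>
     (\<exists>\<tau>. bij_betw \<tau> (sym_prod L) (sym_prod L) \<and> (\<forall>x. \<tau> (rho L x) = rho L (mat_app F x)))"

definition perm_mat :: "('n \<Rightarrow> 'n) \<Rightarrow> 'n \<Rightarrow> 'n \<Rightarrow> complex^'g::finite^'g" where
  "perm_mat \<sigma> = (\<lambda>i j. if \<sigma> i = j then mat 1 else 0)"

definition fg_mat :: "complex^'g::finite^'g \<Rightarrow> complex^'g^'g \<Rightarrow> 'n \<Rightarrow> 'n \<Rightarrow> complex^'g^'g" where
  "fg_mat f g = (\<lambda>i j. if i = j then f else g)"

end

theory Submission
  imports Defs
begin

text \<open>
  A matrix F = perm_mat \<sigma> \<cdot> fg_mat f g satisfies F (x \<circ> p) = F x \<circ> (\<sigma>\<inverse> p \<sigma>) for every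
  permutation p of the factors, so, being an automorphism, it descends to a bijection of the
  symmetric product.

  Conversely, if F descends, then for every permutation p and every x some permutation \<pi> gives
  F (x \<circ> p) \<circ> \<pi> = F x modulo the lattice. There are finitely many \<pi>, each with a real-linear
  defect map, and the lattice is countable, so one \<pi> works exactly for all x. For the
  transposition of two columns a and b this means that swapping these columns permutes the rows
  of F. By simplicity of X the columns a and b differ in at most two rows: otherwise a vector
  anti-invariant under the row permutation would lift to a nonzero vector killed by a nonzero
  difference of endomorphisms. Distinct rows that are closed under column transpositions, with any
  two columns differing in at most two rows, must all be f at one position and g elsewhere.
\<close>

subsection \<open>Lattices\<close>

lemma is_latticeE:
  fixes L :: "(complex^'g::finite) set"
  assumes "is_lattice L"
  obtains B where "finite B" "independent B" "card B = 2 * CARD('g)"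
    and "L = range (\<lambda>k. \<Sum>b\<in>B. of_int (k b) *\<^sub>R b)"
  using assms unfolding is_lattice_def by (auto simp: image_def)

lemma lattice_zero: "is_lattice L \<Longrightarrow> 0 \<in> L"
  by (erule is_latticeE) (auto intro!: image_eqI[where x = "\<lambda>_. 0"])

lemma lattice_diff:
  assumes "is_lattice L" "x \<in> L" "y \<in> L"
  shows "x - y \<in> L"
proof -
  obtain B where L: "L = range (\<lambda>k. \<Sum>b\<in>B. of_int (k b) *\<^sub>R b)"
    using assms(1) by (rule is_latticeE)
  obtain k l where "x = (\<Sum>b\<in>B. of_int (k b) *\<^sub>R b)" "y = (\<Sum>b\<in>B. of_int (l b) *\<^sub>R b)"
    using assms(2,3) unfolding L by blast
  then have "x - y = (\<Sum>b\<in>B. of_int (k b - l b) *\<^sub>R b)"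
    by (simp add: sum_subtractf scaleR_diff_left)
  then show ?thesis unfolding L by (intro image_eqI[where x = "\<lambda>b. k b - l b"]) auto
qed

lemma lattice_uminus: "is_lattice L \<Longrightarrow> x \<in> L \<Longrightarrow> - x \<in> L"
  using lattice_diff[of L 0 x] lattice_zero[of L] by simp

lemma lattice_add: "is_lattice L \<Longrightarrow> x \<in> L \<Longrightarrow> y \<in> L \<Longrightarrow> x + y \<in> L"
  using lattice_diff[of L x "- y"] lattice_uminus[of L y] by simp

lemma lattice_sum: "is_lattice L \<Longrightarrow> (\<And>i. i \<in> S \<Longrightarrow> h i \<in> L) \<Longrightarrow> sum h S \<in> L"
  by (induction S rule: infinite_finite_induct) (auto intro: lattice_zero lattice_add)

lemma span_lattice:
  fixes L :: "(complex^'g::finite) set"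
  assumes "is_lattice L"
  shows "span L = UNIV"
proof -
  obtain B where B: "finite B" "independent B" "card B = 2 * CARD('g)"
    and L: "L = range (\<lambda>k. \<Sum>b\<in>B. of_int (k b) *\<^sub>R b)"
    using assms by (rule is_latticeE)
  have "b0 \<in> L" if "b0 \<in> B" for b0
  proof -
    have "(\<Sum>b\<in>B. of_int (if b = b0 then 1 else 0) *\<^sub>R b) = (\<Sum>b\<in>B. if b = b0 then b else 0)"
      by (rule sum.cong) auto
    also have "\<dots> = b0"
      using B(1) that by simp
    finally show ?thesis
      unfolding L by (auto intro!: image_eqI[where x = "\<lambda>b. if b = b0 then 1 else 0"])
  qed
  then have "span B \<subseteq> span L"
    by (intro span_mono subsetI)
  moreover have "UNIV \<subseteq> span B"
    by (rule card_ge_dim_independent) (use B in auto)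
  ultimately show ?thesis
    by blast
qed

lemma countable_lattice:
  assumes "is_lattice L"
  shows "countable L"
proof -
  obtain B where "finite B" and L: "L = range (\<lambda>k. \<Sum>b\<in>B. of_int (k b) *\<^sub>R b)"
    using assms by (rule is_latticeE)
  have "L = (\<lambda>k. \<Sum>b\<in>B. of_int (k b) *\<^sub>R b) ` (B \<rightarrow>\<^sub>E UNIV)"
  proof (intro equalityI subsetI)
    fix x assume "x \<in> L"
    then obtain k where "x = (\<Sum>b\<in>B. of_int (k b) *\<^sub>R b)" unfolding L by blast
    also have "\<dots> = (\<Sum>b\<in>B. of_int (restrict k B b) *\<^sub>R b)" by (rule sum.cong) auto
    finally show "x \<in> (\<lambda>k. \<Sum>b\<in>B. of_int (k b) *\<^sub>R b) ` (B \<rightarrow>\<^sub>E UNIV)"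
      by (auto intro!: image_eqI[where x = "restrict k B"])
  qed (use L in blast)
  then show ?thesis
    using \<open>finite B\<close> by (simp add: countable_PiE)
qed

subsection \<open>Endomorphisms of a simple abelian variety\<close>

lemma simple_av_lattice: "simple_av L \<Longrightarrow> is_lattice L"
  by (simp add: simple_av_def is_abelian_variety_def)

lemma End_AV_diff: "is_lattice L \<Longrightarrow> A \<in> End_AV L \<Longrightarrow> B \<in> End_AV L \<Longrightarrow> A - B \<in> End_AV L"
  by (simp add: End_AV_def matrix_vector_mult_diff_rdistrib lattice_diff)

lemma range_End_AV_subvariety:
  assumes "is_lattice L" "A \<in> End_AV L"
  shows "complex_subspace (range ((*v) A))" and "span (range ((*v) A) \<inter> L) = range ((*v) A)"
proof -
  show "complex_subspace (range ((*v) A))"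
    unfolding complex_subspace_def
  proof (intro conjI ballI allI impI)
    show "0 \<in> range ((*v) A)"
      by (metis matrix_vector_mult_0_right rangeI)
    show "x + y \<in> range ((*v) A)" if "x \<in> range ((*v) A)" "y \<in> range ((*v) A)" for x y
      using that by (auto simp flip: matrix_vector_right_distrib)
    show "c *s x \<in> range ((*v) A)" if "x \<in> range ((*v) A)" for c x
      using that by (auto simp flip: vector_scalar_commute)
  qed
  show "span (range ((*v) A) \<inter> L) = range ((*v) A)"
  proof
    show "span (range ((*v) A) \<inter> L) \<subseteq> range ((*v) A)"
      by (simp add: span_minimal subspace_UNIV linear_subspace_image)
    have "range ((*v) A) = (*v) A ` span L"
      using span_lattice[OF assms(1)] by simp
    also have "\<dots> = span ((*v) A ` L)"
      by (simp add: span_linear_image)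
    also have "\<dots> \<subseteq> span (range ((*v) A) \<inter> L)"
      using assms(2) by (intro span_mono) (auto simp: End_AV_def)
    finally show "range ((*v) A) \<subseteq> span (range ((*v) A) \<inter> L)" .
  qed
qed

lemma simple_av_End_AV_inj:
  assumes "simple_av L" "A \<in> End_AV L" "A \<noteq> 0"
  shows "inj ((*v) A)"
proof -
  have "range ((*v) A) \<noteq> {0}"
  proof
    assume "range ((*v) A) = {0}"
    then have "A *v x = 0 *v x" for x
      by auto
    then show False
      using \<open>A \<noteq> 0\<close> matrix_eq by blast
  qed
  then have "surj ((*v) A)"
    using assms(1) range_End_AV_subvariety[OF simple_av_lattice[OF assms(1)] assms(2)]
    unfolding simple_av_def by blast
  then show ?thesis
    by (simp add: linear_surjective_imp_injective)
qed

lemma simple_av_End_AV_eq_on: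
  assumes "simple_av L" "A \<in> End_AV L" "B \<in> End_AV L" "A \<noteq> B" "A *v u = B *v u"
  shows "u = 0"
proof -
  have "A - B \<in> End_AV L"
    using End_AV_diff[OF simple_av_lattice[OF assms(1)] assms(2,3)] .
  then have "inj ((*v) (A - B))"
    using simple_av_End_AV_inj[OF assms(1)] assms(4) by simp
  moreover have "(A - B) *v u = (A - B) *v 0"
    using assms(5) by (simp add: matrix_vector_mult_diff_rdistrib)
  ultimately show ?thesis
    by (rule injD)
qed

definition incl :: "'n \<Rightarrow> complex^'g::finite \<Rightarrow> 'n \<Rightarrow> complex^'g" where
  "incl k w = (\<lambda>j. if j = k then w else 0)"

lemma mat_app_incl: "mat_app F (incl k w) i = F i k *v w"
  unfolding mat_app_def incl_def by (simp add: if_distrib cong: if_cong)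

lemma incl_comp_permutes: "p permutes UNIV \<Longrightarrow> incl k w \<circ> p = incl (inv p k) w"
  by (auto simp: incl_def fun_eq_iff permutes_inverses dest: permutes_inv_eq)

lemma mat_app_diff: "mat_app F (\<lambda>k. x k - y k) i = mat_app F x i - mat_app F y i"
  unfolding mat_app_def by (simp add: matrix_vector_mult_diff_distrib sum_subtractf)

lemma mat_app_uminus: "mat_app F (\<lambda>k. - x k) i = - mat_app F x i"
  using mat_app_diff[of F "\<lambda>_. 0" x i] unfolding mat_app_def by simp

lemma matrix_vector_mult_scaleR_complex:
  fixes A :: "complex^'n^'m"
  shows "A *v (c *\<^sub>R x) = c *\<^sub>R (A *v x)"
  using linear_iff matrix_vector_mul_linear by blast

lemma mat_app_add: "mat_app F (\<lambda>k. x k + y k) i = mat_app F x i + mat_app F y i"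
  unfolding mat_app_def by (simp add: matrix_vector_right_distrib sum.distrib)

lemma mat_app_scaleR: "mat_app F (\<lambda>k. c *\<^sub>R x k) i = c *\<^sub>R mat_app F x i"
  unfolding mat_app_def by (simp add: scaleR_sum_right matrix_vector_mult_scaleR_complex)

lemma matrix_vector_mult_sum:
  fixes A :: "complex^'n^'m"
  shows "A *v sum v S = (\<Sum>k\<in>S. A *v v k)"
  by (rule linear_sum[OF matrix_vector_mul_linear])

lemma sum_matrix_vector_mult: "sum A S *v x = (\<Sum>k\<in>S. A k *v x)"
  by (induction S rule: infinite_finite_induct) (auto simp: matrix_vector_mult_add_rdistrib)

lemma mat_app_mat_comp: "mat_app (mat_comp F G) x = mat_app F (mat_app G x)"
proof
  fix i
  have "mat_app F (mat_app G x) i = (\<Sum>j\<in>UNIV. \<Sum>k\<in>UNIV. F i j *v (G j k *v x k))"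
    unfolding mat_app_def by (simp add: matrix_vector_mult_sum)
  also have "\<dots> = (\<Sum>k\<in>UNIV. (\<Sum>j\<in>UNIV. F i j ** G j k) *v x k)"
    by (subst sum.swap) (simp add: matrix_vector_mul_assoc sum_matrix_vector_mult)
  finally show "mat_app (mat_comp F G) x i = mat_app F (mat_app G x) i"
    unfolding mat_app_def mat_comp_def by simp
qed

lemma mat_app_unit_row:
  assumes "\<And>j. F i j = (if j = k then mat 1 else 0)"
  shows "mat_app F x i = x k"
proof -
  have "mat_app F x i = (\<Sum>j\<in>UNIV. if j = k then x j else 0)"
    unfolding mat_app_def by (rule sum.cong) (simp_all add: assms)
  then show ?thesis
    by simp
qed

lemma mat_app_mat_id: "mat_app mat_id x = x"
  by (rule ext, rule mat_app_unit_row) (simp add: mat_id_def eq_commute)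

lemma mat_app_perm_mat: "mat_app (perm_mat \<sigma>) x i = x (\<sigma> i)"
  by (rule mat_app_unit_row) (simp add: perm_mat_def eq_commute)

lemma mat_app_fg_mat: "mat_app (fg_mat f g) x i = (f - g) *v x i + g *v (\<Sum>k\<in>UNIV. x k)"
proof -
  have "mat_app (fg_mat f g) x i = (\<Sum>k\<in>UNIV. g *v x k + (if k = i then (f - g) *v x k else 0))"
    unfolding mat_app_def fg_mat_def by (rule sum.cong) (auto simp: matrix_vector_mult_diff_rdistrib)
  then show ?thesis
    by (simp add: sum.distrib matrix_vector_mult_sum add.commute)
qed

lemma mat_comp_perm_mat: "mat_comp (perm_mat \<sigma>) M i j = M (\<sigma> i) j"
proof -
  have "mat_comp (perm_mat \<sigma>) M i j = (\<Sum>k\<in>UNIV. if k = \<sigma> i then M k j else 0)"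
    unfolding mat_comp_def perm_mat_def by (rule sum.cong) auto
  then show ?thesis
    by simp
qed

lemma mat_app_perm_fg:
  "mat_app (mat_comp (perm_mat \<sigma>) (fg_mat f g)) x i = (f - g) *v x (\<sigma> i) + g *v (\<Sum>k\<in>UNIV. x k)"
  by (simp add: mat_app_mat_comp mat_app_perm_mat mat_app_fg_mat)

lemma mat_app_perm_fg_comp:
  assumes "\<sigma> permutes UNIV" "p permutes UNIV"
  shows "mat_app (mat_comp (perm_mat \<sigma>) (fg_mat f g)) (x \<circ> p) =
    mat_app (mat_comp (perm_mat \<sigma>) (fg_mat f g)) x \<circ> (inv \<sigma> \<circ> p \<circ> \<sigma>)"
proof
  fix i
  have "(\<Sum>k\<in>UNIV. (x \<circ> p) k) = (\<Sum>k\<in>UNIV. x k)"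
    using sum.permute[OF assms(2), of x] by simp
  moreover have "\<sigma> (inv \<sigma> (p (\<sigma> i))) = p (\<sigma> i)"
    using permutes_inverses(1)[OF assms(1)] .
  ultimately show "mat_app (mat_comp (perm_mat \<sigma>) (fg_mat f g)) (x \<circ> p) i =
      (mat_app (mat_comp (perm_mat \<sigma>) (fg_mat f g)) x \<circ> (inv \<sigma> \<circ> p \<circ> \<sigma>)) i"
    unfolding mat_app_perm_fg by simp
qed

lemma is_Aut_pow_inverse:
  fixes F :: "'n::finite \<Rightarrow> 'n \<Rightarrow> complex^'g::finite^'g"
  assumes "is_Aut_pow L F"
  shows "\<exists>G. is_End_pow L G \<and> (\<forall>x. mat_app G (mat_app F x) = x) \<and> (\<forall>y. mat_app F (mat_app G y) = y)"
  using assms unfolding is_Aut_pow_def by (metis mat_app_mat_comp mat_app_mat_id)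

lemma bij_mat_app:
  fixes F :: "'n::finite \<Rightarrow> 'n \<Rightarrow> complex^'g::finite^'g"
  assumes "is_Aut_pow L F"
  shows "bij (mat_app F)"
proof -
  obtain G where "\<forall>x. mat_app G (mat_app F x) = x" "\<forall>y. mat_app F (mat_app G y) = y"
    using is_Aut_pow_inverse[OF assms] by blast
  then show ?thesis
    by (intro o_bij[of "mat_app G"]) (auto simp: fun_eq_iff)
qed

lemma mat_app_lattice:
  "is_lattice L \<Longrightarrow> is_End_pow L F \<Longrightarrow> (\<And>j. x j \<in> L) \<Longrightarrow> mat_app F x i \<in> L"
  unfolding mat_app_def is_End_pow_def End_AV_def by (rule lattice_sum) auto

lemma mat_app_lattice_iff:
  fixes F :: "'n::finite \<Rightarrow> 'n \<Rightarrow> complex^'g::finite^'g"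
  assumes "is_lattice L" "is_Aut_pow L F"
  shows "(\<forall>i. mat_app F x i \<in> L) \<longleftrightarrow> (\<forall>i. x i \<in> L)"
proof -
  obtain G where "is_End_pow L G" and GF: "\<forall>x. mat_app G (mat_app F x) = x"
    using is_Aut_pow_inverse[OF assms(2)] by blast
  moreover have "is_End_pow L F"
    using assms(2) unfolding is_Aut_pow_def by blast
  ultimately show ?thesis
    using mat_app_lattice[OF assms(1), of G "mat_app F x"] mat_app_lattice[OF assms(1), of F x]
    by auto
qed

lemma ex_nonzero_vector: "\<exists>w :: complex^'g::finite. w \<noteq> 0"
  by (rule exI[where x = "axis undefined 1"]) (simp add: axis_eq_0_iff)

lemma is_Aut_pow_rows_inj:
  fixes F :: "'n::finite \<Rightarrow> 'n \<Rightarrow> complex^'g::finite^'g"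
  assumes "is_Aut_pow L F"
  shows "inj F"
proof
  fix i i' assume rows: "F i = F i'"
  obtain w :: "complex^'g" where "w \<noteq> 0"
    using ex_nonzero_vector by blast
  obtain x where "mat_app F x = incl i w"
    using bij_mat_app[OF assms] by (metis bij_pointE)
  moreover have "mat_app F x i = mat_app F x i'"
    unfolding mat_app_def rows ..
  ultimately show "i = i'"
    using \<open>w \<noteq> 0\<close> by (auto simp: incl_def split: if_splits)
qed

lemma is_Aut_pow_columns_differ:
  fixes F :: "'n::finite \<Rightarrow> 'n \<Rightarrow> complex^'g::finite^'g"
  assumes "is_Aut_pow L F" "a \<noteq> b"
  shows "\<exists>i. F i a \<noteq> F i b"
proof (rule ccontr)
  obtain w :: "complex^'g" where "w \<noteq> 0"
    using ex_nonzero_vector by blast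
  assume "\<nexists>i. F i a \<noteq> F i b"
  then have "mat_app F (incl a w) = mat_app F (incl b w)"
    by (simp add: fun_eq_iff mat_app_incl)
  then have "incl a w = incl b w"
    using bij_mat_app[OF assms(1)] by (simp add: bij_is_inj inj_eq)
  then have "incl a w a = incl b w a"
    by simp
  then show False
    using \<open>w \<noteq> 0\<close> \<open>a \<noteq> b\<close> by (simp add: incl_def)
qed

subsection \<open>The symmetric product\<close>

lemma equiv_sym_rel:
  assumes "is_lattice L"
  shows "equiv UNIV (sym_rel L)"
proof (rule equivI)
  show "refl (sym_rel L)"
    unfolding refl_on_def sym_rel_def
    using lattice_zero[OF assms] by (auto intro!: exI[where x = id])
  show "sym (sym_rel L)"
  proof (rule symI)
    fix x y assume "(x, y) \<in> sym_rel L"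
    then obtain p where p: "p permutes UNIV" "\<And>i. x (p i) - y i \<in> L"
      unfolding sym_rel_def by blast
    have "y (inv p i) - x i \<in> L" for i
      using lattice_uminus[OF assms p(2)[of "inv p i"]] p(1) by (simp add: permutes_inverses)
    then show "(y, x) \<in> sym_rel L"
      unfolding sym_rel_def using permutes_inv[OF p(1)] by blast
  qed
  show "trans (sym_rel L)"
  proof (rule transI)
    fix x y z assume "(x, y) \<in> sym_rel L" "(y, z) \<in> sym_rel L"
    then obtain p q where p: "p permutes UNIV" "\<And>i. x (p i) - y i \<in> L"
      and q: "q permutes UNIV" "\<And>i. y (q i) - z i \<in> L"
      unfolding sym_rel_def by blast
    have "x ((p \<circ> q) i) - z i \<in> L" for i
      using lattice_add[OF assms p(2)[of "q i"] q(2)[of i]] by simp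
    then show "(x, z) \<in> sym_rel L"
      unfolding sym_rel_def using permutes_compose[OF q(1) p(1)] by blast
  qed
qed auto

lemma image_equiv_class:
  assumes "surj h" "\<And>x y. (h x, h y) \<in> R \<longleftrightarrow> (x, y) \<in> R"
  shows "h ` (R `` {x}) = R `` {h x}"
proof (intro equalityI subsetI)
  fix z assume "z \<in> R `` {h x}"
  moreover obtain y where "z = h y"
    using assms(1) by (metis surjD)
  ultimately show "z \<in> h ` (R `` {x})"
    using assms(2) by auto
qed (use assms(2) in auto)

lemma bij_betw_image_quotient:
  assumes "equiv UNIV R" "surj h" "\<And>x y. (h x, h y) \<in> R \<longleftrightarrow> (x, y) \<in> R"
  shows "bij_betw ((`) h) (UNIV // R) (UNIV // R)"
proof (rule bij_betw_imageI)
  show "inj_on ((`) h) (UNIV // R)"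
  proof (rule inj_onI)
    fix X Y assume "X \<in> UNIV // R" "Y \<in> UNIV // R" "h ` X = h ` Y"
    then obtain x y where X: "X = R `` {x}" and Y: "Y = R `` {y}" and "R `` {h x} = R `` {h y}"
      by (auto elim!: quotientE simp: image_equiv_class[OF assms(2,3)])
    then have "(x, y) \<in> R"
      using eq_equiv_class_iff[OF assms(1)] assms(3) by blast
    then show "X = Y"
      unfolding X Y using equiv_class_eq[OF assms(1)] by blast
  qed
  show "(`) h ` (UNIV // R) = UNIV // R"
  proof (intro equalityI subsetI)
    fix X assume "X \<in> (`) h ` (UNIV // R)"
    then show "X \<in> UNIV // R"
      by (auto elim!: quotientE simp: image_equiv_class[OF assms(2,3)] quotientI)
  next
    fix X assume "X \<in> UNIV // R"
    then obtain y where "X = R `` {y}"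
      by (rule quotientE)
    moreover obtain x where "y = h x"
      using assms(2) by (metis surjD)
    ultimately have "X = h ` (R `` {x})"
      by (simp add: image_equiv_class[OF assms(2,3)])
    then show "X \<in> (`) h ` (UNIV // R)"
      by (auto intro: quotientI)
  qed
qed

lemma symmetric_conditionI:
  assumes "is_lattice L" "surj (mat_app F)"
    and "\<And>x y. (mat_app F x, mat_app F y) \<in> sym_rel L \<longleftrightarrow> (x, y) \<in> sym_rel L"
  shows "symmetric_condition L F"
  unfolding symmetric_condition_def sym_prod_def rho_def
  using bij_betw_image_quotient[OF equiv_sym_rel[OF assms(1)] assms(2,3)]
    image_equiv_class[OF assms(2,3)] by blast

lemma symmetric_condition_respects:
  assumes "is_lattice L" "symmetric_condition L F" "(x, y) \<in> sym_rel L"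
  shows "(mat_app F x, mat_app F y) \<in> sym_rel L"
proof -
  obtain \<tau> where \<tau>: "\<And>x. \<tau> (rho L x) = rho L (mat_app F x)"
    using assms(2) unfolding symmetric_condition_def by blast
  have "rho L x = rho L y"
    unfolding rho_def using equiv_class_eq[OF equiv_sym_rel[OF assms(1)] assms(3)] .
  then have "rho L (mat_app F x) = rho L (mat_app F y)"
    by (metis \<tau>)
  then show ?thesis
    unfolding rho_def using eq_equiv_class_iff[OF equiv_sym_rel[OF assms(1)]] by blast
qed

lemma sym_rel_conj_iff:
  assumes "\<sigma> permutes UNIV"
  shows "(u, v) \<in> sym_rel L \<longleftrightarrow> (\<exists>p. p permutes UNIV \<and> (\<forall>i. u ((inv \<sigma> \<circ> p \<circ> \<sigma>) i) - v i \<in> L))"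
proof
  assume "(u, v) \<in> sym_rel L"
  then obtain \<pi> where \<pi>: "\<pi> permutes UNIV" "\<forall>i. u (\<pi> i) - v i \<in> L"
    unfolding sym_rel_def by blast
  have "\<sigma> \<circ> \<pi> \<circ> inv \<sigma> permutes UNIV"
    using assms \<pi>(1) by (intro permutes_compose permutes_inv)
  moreover have "inv \<sigma> \<circ> (\<sigma> \<circ> \<pi> \<circ> inv \<sigma>) \<circ> \<sigma> = \<pi>"
    using permutes_inverses[OF assms] by (simp add: fun_eq_iff)
  ultimately show "\<exists>p. p permutes UNIV \<and> (\<forall>i. u ((inv \<sigma> \<circ> p \<circ> \<sigma>) i) - v i \<in> L)"
    using \<pi>(2) by (intro exI[where x = "\<sigma> \<circ> \<pi> \<circ> inv \<sigma>"]) simp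
next
  assume "\<exists>p. p permutes UNIV \<and> (\<forall>i. u ((inv \<sigma> \<circ> p \<circ> \<sigma>) i) - v i \<in> L)"
  then obtain p where "p permutes UNIV" "\<forall>i. u ((inv \<sigma> \<circ> p \<circ> \<sigma>) i) - v i \<in> L"
    by blast
  moreover have "inv \<sigma> \<circ> p \<circ> \<sigma> permutes UNIV"
    using assms \<open>p permutes UNIV\<close> by (intro permutes_compose permutes_inv)
  ultimately show "(u, v) \<in> sym_rel L"
    unfolding sym_rel_def by blast
qed

lemma sym_rel_mat_app_iff:
  fixes F :: "'n::finite \<Rightarrow> 'n \<Rightarrow> complex^'g::finite^'g"
  assumes "is_lattice L" "is_Aut_pow L F" "\<sigma> permutes UNIV"
    and equivariant: "\<And>x p. p permutes UNIV \<Longrightarrow> mat_app F (x \<circ> p) = mat_app F x \<circ> (inv \<sigma> \<circ> p \<circ> \<sigma>)"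
  shows "(mat_app F x, mat_app F y) \<in> sym_rel L \<longleftrightarrow> (x, y) \<in> sym_rel L"
proof -
  have shift: "(\<forall>i. mat_app F x ((inv \<sigma> \<circ> p \<circ> \<sigma>) i) - mat_app F y i \<in> L) \<longleftrightarrow>
      (\<forall>i. x (p i) - y i \<in> L)" if "p permutes UNIV" for p
  proof -
    have "mat_app F (\<lambda>k. x (p k) - y k) i = mat_app F x ((inv \<sigma> \<circ> p \<circ> \<sigma>) i) - mat_app F y i" for i
      using fun_cong[OF equivariant[OF that, of x], of i] unfolding mat_app_diff by (simp add: comp_def)
    moreover have "(\<forall>i. mat_app F (\<lambda>k. x (p k) - y k) i \<in> L) \<longleftrightarrow> (\<forall>i. x (p i) - y i \<in> L)"
      by (rule mat_app_lattice_iff[OF assms(1,2)])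
    ultimately show ?thesis
      by simp
  qed
  have "(mat_app F x, mat_app F y) \<in> sym_rel L \<longleftrightarrow>
      (\<exists>p. p permutes UNIV \<and> (\<forall>i. mat_app F x ((inv \<sigma> \<circ> p \<circ> \<sigma>) i) - mat_app F y i \<in> L))"
    by (rule sym_rel_conj_iff[OF assms(3)])
  also have "\<dots> \<longleftrightarrow> (x, y) \<in> sym_rel L"
    unfolding sym_rel_def using shift by blast
  finally show ?thesis .
qed

lemma perm_fg_imp_symmetric_condition:
  assumes "is_lattice L" "is_Aut_pow L F" "\<sigma> permutes UNIV"
    and "F = mat_comp (perm_mat \<sigma>) (fg_mat f g)"
  shows "symmetric_condition L F"
proof (rule symmetric_conditionI[OF assms(1)])
  show "surj (mat_app F)"
    using bij_mat_app[OF assms(2)] by (rule bij_is_surj)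
  show "(mat_app F x, mat_app F y) \<in> sym_rel L \<longleftrightarrow> (x, y) \<in> sym_rel L" for x y
  proof (rule sym_rel_mat_app_iff[OF assms(1-3)])
    show "mat_app F (x \<circ> p) = mat_app F x \<circ> (inv \<sigma> \<circ> p \<circ> \<sigma>)" if "p permutes UNIV" for x p
      unfolding assms(4) using assms(3) that by (rule mat_app_perm_fg_comp)
  qed
qed

subsection \<open>A countability argument\<close>

lemma finite_zeros_affine_line:
  fixes a b :: "'a::real_vector"
  assumes "a \<noteq> 0 \<or> b \<noteq> 0"
  shows "finite {t::real. a + t *\<^sub>R b = 0}"
proof (cases "b = 0")
  case True
  then show ?thesis
    using assms by simp
next
  case False
  then have "inj (\<lambda>t::real. a + t *\<^sub>R b)"
    by (simp add: inj_def)
  then show ?thesis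
    using finite_vimageI[of "{0}"] by (simp add: vimage_def)
qed

lemma linear_maps_common_nonzero:
  fixes N :: "'i \<Rightarrow> 'a::real_vector \<Rightarrow> 'b::real_vector"
  assumes "finite P" "\<And>\<pi>. \<pi> \<in> P \<Longrightarrow> linear (N \<pi>)" "\<And>\<pi>. \<pi> \<in> P \<Longrightarrow> \<exists>u. N \<pi> u \<noteq> 0"
  shows "\<exists>v. \<forall>\<pi>\<in>P. N \<pi> v \<noteq> 0"
  using assms
proof (induction P rule: finite_induct)
  case empty
  then show ?case by simp
next
  case (insert M S)
  then obtain v where v: "\<forall>\<pi>\<in>S. N \<pi> v \<noteq> 0"
    by blast
  obtain u where u: "N M u \<noteq> 0"
    using insert.prems(2) by blast
  have "finite (\<Union>\<pi>\<in>insert M S. {t::real. N \<pi> v + t *\<^sub>R N \<pi> u = 0})"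
  proof (intro finite_UN_I finite.insertI insert.hyps(1))
    fix \<pi> assume "\<pi> \<in> insert M S"
    then show "finite {t::real. N \<pi> v + t *\<^sub>R N \<pi> u = 0}"
      using u v by (intro finite_zeros_affine_line) auto
  qed
  then obtain t where t: "t \<notin> (\<Union>\<pi>\<in>insert M S. {t::real. N \<pi> v + t *\<^sub>R N \<pi> u = 0})"
    using ex_new_if_finite[OF infinite_UNIV_char_0] by blast
  show ?case
  proof (intro exI ballI)
    fix \<pi> assume \<pi>: "\<pi> \<in> insert M S"
    then have "N \<pi> (v + t *\<^sub>R u) = N \<pi> v + t *\<^sub>R N \<pi> u"
      using insert.prems(1) by (simp add: linear_add linear_scale)
    then show "N \<pi> (v + t *\<^sub>R u) \<noteq> 0"
      using t \<pi> by auto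
  qed
qed

text \<open>A line through a point avoiding all the kernels meets each preimage of C in countably many
  points, which cannot cover the real line.\<close>

lemma countable_cover_by_linear_maps:
  fixes N :: "'i \<Rightarrow> 'a::real_vector \<Rightarrow> 'b::real_vector"
  assumes "finite P" "\<And>\<pi>. \<pi> \<in> P \<Longrightarrow> linear (N \<pi>)" "countable C"
    and cover: "\<And>v. \<exists>\<pi>\<in>P. N \<pi> v \<in> C"
  shows "\<exists>\<pi>\<in>P. \<forall>v. N \<pi> v = 0"
proof (rule ccontr)
  assume "\<not> ?thesis"
  then have "\<And>\<pi>. \<pi> \<in> P \<Longrightarrow> \<exists>u. N \<pi> u \<noteq> 0"
    by blast
  then obtain v where v: "\<forall>\<pi>\<in>P. N \<pi> v \<noteq> 0"
    using linear_maps_common_nonzero[of P N] assms(1,2) by blast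
  have "countable (\<Union>\<pi>\<in>P. {t::real. t *\<^sub>R N \<pi> v \<in> C})"
  proof (intro countable_UN countable_finite[OF assms(1)])
    fix \<pi> assume "\<pi> \<in> P"
    then have "inj_on (\<lambda>t. t *\<^sub>R N \<pi> v) {t. t *\<^sub>R N \<pi> v \<in> C}"
      using v by (auto intro!: inj_onI)
    moreover have "(\<lambda>t. t *\<^sub>R N \<pi> v) ` {t. t *\<^sub>R N \<pi> v \<in> C} \<subseteq> C"
      by blast
    ultimately show "countable {t::real. t *\<^sub>R N \<pi> v \<in> C}"
      using assms(3) by (metis countable_image_inj_on countable_subset)
  qed
  moreover have "UNIV \<subseteq> (\<Union>\<pi>\<in>P. {t::real. t *\<^sub>R N \<pi> v \<in> C})"
  proof
    fix t :: real
    obtain \<pi> where "\<pi> \<in> P" "N \<pi> (t *\<^sub>R v) \<in> C"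
      using cover by blast
    then show "t \<in> (\<Union>\<pi>\<in>P. {t. t *\<^sub>R N \<pi> v \<in> C})"
      using assms(2)[of \<pi>] by (auto simp: linear_scale)
  qed
  ultimately have "countable (UNIV :: real set)"
    by (rule countable_subset[rotated])
  then show False
    using uncountable_UNIV_real by blast
qed

lemma uniform_exact_permutation:
  fixes F :: "'n::finite \<Rightarrow> 'n \<Rightarrow> complex^'g::finite^'g"
  assumes "is_lattice L"
    and "\<And>x. \<exists>\<pi>. \<pi> permutes UNIV \<and> (\<forall>i. mat_app F (x \<circ> p) (\<pi> i) - mat_app F x i \<in> L)"
  shows "\<exists>\<pi>. \<pi> permutes UNIV \<and> (\<forall>x. mat_app F (x \<circ> p) \<circ> \<pi> = mat_app F x)"
proof -
  define N where "N \<pi> y = (\<chi> i. mat_app F (\<lambda>k. y $ p k) (\<pi> i) - mat_app F (($) y) i)"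
    for \<pi> and y :: "complex^'g^'n"
  have "($) (y + z) = (\<lambda>k. y $ k + z $ k)" "($) (c *\<^sub>R y) = (\<lambda>k. c *\<^sub>R y $ k)"
    for y z :: "complex^'g^'n" and c
    by auto
  then have "linear (N \<pi>)" for \<pi>
    by (intro linearI) (simp_all add: N_def vec_eq_iff mat_app_add mat_app_scaleR scaleR_diff_right)
  moreover have "countable {z :: complex^'g^'n. \<forall>i. z $ i \<in> L}"
    using countable_lattice[OF assms(1)] by (rule countable_vector)
  moreover have "\<exists>\<pi>\<in>{\<pi>. \<pi> permutes UNIV}. N \<pi> y \<in> {z. \<forall>i. z $ i \<in> L}" for y
  proof -
    obtain \<pi> where "\<pi> permutes UNIV" "\<forall>i. mat_app F (($) y \<circ> p) (\<pi> i) - mat_app F (($) y) i \<in> L"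
      using assms(2) by blast
    then show ?thesis
      unfolding N_def comp_def by auto
  qed
  moreover have "finite {\<pi> :: 'n \<Rightarrow> 'n. \<pi> permutes UNIV}"
    by (simp add: finite_permutations)
  ultimately obtain \<pi> where "\<pi> \<in> {\<pi>. \<pi> permutes UNIV}" and N0: "\<forall>y. N \<pi> y = 0"
    using countable_cover_by_linear_maps[of "{\<pi>. \<pi> permutes UNIV}" N] by blast
  moreover have "mat_app F (x \<circ> p) \<circ> \<pi> = mat_app F x" for x
  proof
    fix i
    have "N \<pi> (vec_lambda x) $ i = 0"
      using N0 by simp
    then show "(mat_app F (x \<circ> p) \<circ> \<pi>) i = mat_app F x i"
      unfolding N_def comp_def by (simp add: vec_lambda_inverse)
  qed
  ultimately show ?thesis
    by blast
qed

subsection \<open>Rows of an automorphism satisfying the symmetric condition\<close>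

lemma symmetric_condition_transpose:
  fixes F :: "'n::finite \<Rightarrow> 'n \<Rightarrow> complex^'g::finite^'g"
  assumes "is_lattice L" "symmetric_condition L F"
  shows "\<exists>\<pi>. \<forall>x. mat_app F (x \<circ> Transposition.transpose a b) \<circ> \<pi> = mat_app F x"
proof -
  have transpose: "Transposition.transpose a b permutes UNIV"
    by (rule permutes_swap_id) simp_all
  have "(x \<circ> Transposition.transpose a b, x) \<in> sym_rel L" for x
    unfolding sym_rel_def using assms(1) permutes_inv[OF transpose]
    by (auto simp: permutes_inverses lattice_zero)
  then have "\<exists>\<pi>. \<pi> permutes UNIV \<and>
      (\<forall>i. mat_app F (x \<circ> Transposition.transpose a b) (\<pi> i) - mat_app F x i \<in> L)" for x
    using symmetric_condition_respects[OF assms] unfolding sym_rel_def by blast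
  then show ?thesis
    using uniform_exact_permutation[OF assms(1)] by blast
qed

lemma rows_comp_permutes:
  fixes F :: "'n::finite \<Rightarrow> 'n \<Rightarrow> complex^'g::finite^'g"
  assumes "p permutes UNIV" "\<forall>x. mat_app F (x \<circ> p) \<circ> \<pi> = mat_app F x"
  shows "F (\<pi> i) = F i \<circ> p"
proof
  fix j
  have "F (\<pi> i) j *v w = F i (p j) *v w" for w
  proof -
    have "mat_app F (incl (p j) w \<circ> p) (\<pi> i) = mat_app F (incl (p j) w) i"
      using fun_cong[OF spec[OF assms(2), of "incl (p j) w"], of i] by simp
    then show ?thesis
      using assms(1) by (simp add: incl_comp_permutes mat_app_incl permutes_inverses)
  qed
  then show "F (\<pi> i) j = (F i \<circ> p) j"
    by (simp add: matrix_eq)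
qed

lemma mat_app_anti_invariant:
  fixes F :: "'n::finite \<Rightarrow> 'n \<Rightarrow> complex^'g::finite^'g"
  assumes "a \<noteq> b" "x \<circ> Transposition.transpose a b = (\<lambda>k. - x k)"
  shows "mat_app F x m = (F m a - F m b) *v x a"
proof -
  have "x k = 0" if "k \<noteq> a" "k \<noteq> b" for k
  proof -
    have "x k = - x k"
      using fun_cong[OF assms(2), of k] that by simp
    then have "2 *\<^sub>R x k = 0"
      by (metis add.right_inverse scaleR_2)
    then show ?thesis
      by simp
  qed
  then have "mat_app F x m = (\<Sum>k\<in>{a, b}. F m k *v x k)"
    unfolding mat_app_def by (intro sum.mono_neutral_right) auto
  moreover have "x b = - x a"
    using fun_cong[OF assms(2), of a] by simp
  ultimately show ?thesis
    using assms(1) by (simp add: matrix_vector_mult_diff_rdistrib linear_neg[OF matrix_vector_mul_linear])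
qed

lemma transpose_row_permutation:
  fixes F :: "'n::finite \<Rightarrow> 'n \<Rightarrow> complex^'g::finite^'g"
  assumes "is_Aut_pow L F"
    and \<pi>: "\<forall>x. mat_app F (x \<circ> Transposition.transpose a b) \<circ> \<pi> = mat_app F x"
  shows "F (\<pi> r) = F r \<circ> Transposition.transpose a b" and "\<pi> (\<pi> r) = r"
proof -
  have rows: "F (\<pi> s) = F s \<circ> Transposition.transpose a b" for s
    using permutes_swap_id[of a UNIV b] \<pi> by (rule rows_comp_permutes) simp_all
  then show "F (\<pi> r) = F r \<circ> Transposition.transpose a b" .
  show "\<pi> (\<pi> r) = r"
    using is_Aut_pow_rows_inj[OF assms(1)] by (rule injD) (simp add: rows comp_assoc)
qed

text \<open>The vector with entries w and -w in the rows i and \<pi> i is anti-invariant under \<pi>, so its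
  preimage is anti-invariant under the transposition and only sees the difference of the two
  columns, which is injective on a third row where the columns differ.\<close>

lemma no_third_differing_row:
  fixes F :: "'n::finite \<Rightarrow> 'n \<Rightarrow> complex^'g::finite^'g"
  assumes "simple_av L" "is_Aut_pow L F" "a \<noteq> b"
    and \<pi>: "\<forall>x. mat_app F (x \<circ> Transposition.transpose a b) \<circ> \<pi> = mat_app F x"
    and "\<pi> i \<noteq> i" "F m a \<noteq> F m b" "m \<noteq> i" "m \<noteq> \<pi> i"
  shows False
proof -
  let ?t = "Transposition.transpose a b"
  obtain w :: "complex^'g" where "w \<noteq> 0"
    using ex_nonzero_vector by blast
  define y where "y s = (if s = i then w else if s = \<pi> i then - w else 0)" for s
  obtain x where Fx: "mat_app F x = y"
    using bij_mat_app[OF assms(2)] by (metis bij_pointE)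
  have "y (\<pi> s) = - y s" for s
    using \<open>\<pi> i \<noteq> i\<close> transpose_row_permutation(2)[OF assms(2) \<pi>] by (auto simp: y_def) metis+
  then have "mat_app F (x \<circ> ?t) = mat_app F (\<lambda>k. - x k)"
    using fun_cong[OF spec[OF \<pi>, of "x \<circ> ?t"]]
    by (simp add: fun_eq_iff comp_assoc Fx mat_app_uminus)
  then have "x \<circ> ?t = (\<lambda>k. - x k)"
    using bij_mat_app[OF assms(2)] by (simp add: bij_is_inj inj_eq)
  then have y_diff: "y s = (F s a - F s b) *v x a" for s
    using mat_app_anti_invariant[OF assms(3)] Fx by metis
  have "F m a \<in> End_AV L" "F m b \<in> End_AV L"
    using assms(2) by (simp_all add: is_Aut_pow_def is_End_pow_def)
  moreover have "F m a *v x a = F m b *v x a"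
    using y_diff[of m] assms(7,8) by (simp add: y_def matrix_vector_mult_diff_rdistrib)
  ultimately have "x a = 0"
    using simple_av_End_AV_eq_on[OF assms(1)] assms(6) by blast
  then show False
    using y_diff[of i] \<open>w \<noteq> 0\<close> by (simp add: y_def)
qed

lemma at_most_two_rows_differ:
  fixes F :: "'n::finite \<Rightarrow> 'n \<Rightarrow> complex^'g::finite^'g"
  assumes "simple_av L" "is_Aut_pow L F" "a \<noteq> b"
    and \<pi>: "\<forall>x. mat_app F (x \<circ> Transposition.transpose a b) \<circ> \<pi> = mat_app F x"
    and "F i a \<noteq> F i b" "F j a \<noteq> F j b" "F k a \<noteq> F k b"
  shows "i = j \<or> i = k \<or> j = k"
proof -
  have "\<pi> i \<noteq> i"
    using fun_cong[OF transpose_row_permutation(1)[OF assms(2) \<pi>, of i], of a] assms(5) by auto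
  then show ?thesis
    using no_third_differing_row[OF assms(1-3) \<pi> \<open>\<pi> i \<noteq> i\<close>] assms(6,7) by blast
qed

subsection \<open>Rows closed under column transpositions\<close>

locale transposition_closed_rows =
  fixes R :: "'n::finite \<Rightarrow> 'n \<Rightarrow> 'v"
  assumes closed: "\<And>i a b. \<exists>j. R j = R i \<circ> Transposition.transpose a b"
    and at_most_two: "\<And>a b i j k. R i a \<noteq> R i b \<Longrightarrow> R j a \<noteq> R j b \<Longrightarrow> R k a \<noteq> R k b \<Longrightarrow>
      i = j \<or> i = k \<or> j = k"
begin

lemma no_three_values:
  assumes "R i a \<noteq> R i b" "R i a \<noteq> R i e" "R i b \<noteq> R i e"
  shows False
proof -
  obtain j k where j: "R j = R i \<circ> Transposition.transpose a b"
    and k: "R k = R i \<circ> Transposition.transpose a e"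
    using closed by blast
  have "a \<noteq> b" "a \<noteq> e" "b \<noteq> e"
    using assms by auto
  then have "R j a = R i b" "R j e = R i e" "R k a = R i e" "R k e = R i a"
    by (simp_all add: j k)
  then show False
    using at_most_two[of i a e j k] assms by auto
qed

lemma no_two_pairs:
  assumes "a \<noteq> a'" "b \<noteq> b'" "R i a = R i a'" "R i b = R i b'" "R i a \<noteq> R i b"
  shows False
proof -
  obtain j k where j: "R j = R i \<circ> Transposition.transpose a b"
    and k: "R k = R i \<circ> Transposition.transpose a' b'"
    using closed by blast
  have "a \<noteq> b" "a \<noteq> b'" "a' \<noteq> b" "a' \<noteq> b'"
    using assms by auto
  then have "R j a = R i b" "R j b = R i a" "R k a = R i a" "R k b = R i b" "R k a' = R i b'"
    using assms(1,2) by (simp_all add: j k)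
  then show False
    using at_most_two[of i a b j k] assms by auto
qed

lemma nonconstant_row:
  assumes "R i a \<noteq> R i b"
  shows "\<exists>s f g. f \<noteq> g \<and> R i = (\<lambda>j. if s = j then f else g)"
proof -
  have two_values: "R i k = R i a \<or> R i k = R i b" for k
    using no_three_values[of i a b k] assms by metis
  show ?thesis
  proof (cases "\<exists>a'. a' \<noteq> a \<and> R i a' = R i a")
    case True
    then obtain a' where "a' \<noteq> a" "R i a' = R i a"
      by blast
    then have "R i k = R i a" if "k \<noteq> b" for k
      using no_two_pairs[of a a' b k i] two_values[of k] assms that by metis
    then have "R i = (\<lambda>j. if b = j then R i b else R i a)"
      by auto
    then show ?thesis
      using assms by metis
  next
    case False
    then have "R i k = R i b" if "k \<noteq> a" for k
      using two_values[of k] that by blast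
    then have "R i = (\<lambda>j. if a = j then R i a else R i b)"
      by auto
    then show ?thesis
      using assms by metis
  qed
qed

text \<open>Once a single row has this shape, transpositions produce all n such rows,
  and injectivity leaves no room for any other row.\<close>

lemma rows_of_fg_shape:
  assumes "inj R" "R i a \<noteq> R i b"
  shows "\<exists>f g. \<forall>i. \<exists>s. R i = (\<lambda>j. if s = j then f else g)"
proof -
  define row where "row s f g = (\<lambda>j. if s = j then f else g)" for s :: 'n and f g :: 'v
  obtain s f g where "f \<noteq> g" and s: "R i = row s f g"
    using nonconstant_row[OF assms(2)] unfolding row_def by blast
  have "inj (\<lambda>s. row s f g)"
    using \<open>f \<noteq> g\<close> by (auto intro!: injI simp: row_def fun_eq_iff split: if_splits)
  moreover have "range (\<lambda>s. row s f g) \<subseteq> range R"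
  proof
    fix r assume "r \<in> range (\<lambda>s. row s f g)"
    then obtain t where "r = row t f g"
      by blast
    also have "\<dots> = R i \<circ> Transposition.transpose s t"
      by (auto simp: s row_def fun_eq_iff Transposition.transpose_def)
    finally show "r \<in> range R"
      using closed[of i s t] by (metis rangeI)
  qed
  moreover have "card (range (\<lambda>s. row s f g)) = card (range R)"
    using assms(1) \<open>inj (\<lambda>s. row s f g)\<close> by (simp add: card_image)
  ultimately have "range R = range (\<lambda>s. row s f g)"
    using card_subset_eq[of "range R" "range (\<lambda>s. row s f g)"] by simp
  then have "\<forall>i. \<exists>s. R i = row s f g"
    by (auto simp: set_eq_iff image_iff)
  then show ?thesis
    unfolding row_def by blast
qed

lemma rows_eq_fg_mat:
  assumes "inj R" "R i a \<noteq> R i b"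
  shows "\<exists>\<sigma> f g. \<sigma> permutes UNIV \<and> (\<forall>i j. R i j = (if \<sigma> i = j then f else g))"
proof -
  obtain f g where "\<forall>i. \<exists>s. R i = (\<lambda>j. if s = j then f else g)"
    using rows_of_fg_shape[OF assms] by blast
  then obtain \<sigma> where \<sigma>: "\<forall>i. R i = (\<lambda>j. if \<sigma> i = j then f else g)"
    by (rule choice[THEN exE])
  have "inj \<sigma>"
  proof (rule injI)
    fix i i' assume "\<sigma> i = \<sigma> i'"
    then have "R i = R i'"
      using \<sigma> by simp
    with assms(1) show "i = i'"
      by (rule injD)
  qed
  then have "\<sigma> permutes UNIV"
    by (rule inj_imp_permutes) simp_all
  then show ?thesis
    using \<sigma> by auto
qed

end

lemma symmetric_automorphism_rows:
  fixes F :: "'n::finite \<Rightarrow> 'n \<Rightarrow> complex^'g::finite^'g"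
  assumes "simple_av L" "is_Aut_pow L F" "symmetric_condition L F"
  shows "transposition_closed_rows F"
proof (rule transposition_closed_rows.intro)
  have lattice: "is_lattice L"
    using assms(1) by (rule simple_av_lattice)
  show "\<exists>j. F j = F i \<circ> Transposition.transpose a b" for i a b
    using symmetric_condition_transpose[OF lattice assms(3), of a b]
      transpose_row_permutation(1)[OF assms(2)] by blast
  show "i = j \<or> i = k \<or> j = k" if "F i a \<noteq> F i b" "F j a \<noteq> F j b" "F k a \<noteq> F k b" for a b i j k
  proof -
    have "a \<noteq> b"
      using that(1) by blast
    then show ?thesis
      using symmetric_condition_transpose[OF lattice assms(3), of a b]
        at_most_two_rows_differ[OF assms(1,2)] that by blast
  qed
qed

lemma symmetric_condition_imp_perm_fg:
  fixes F :: "'n::finite \<Rightarrow> 'n \<Rightarrow> complex^'g::finite^'g"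
  assumes "simple_av L" "CARD('n) \<ge> 2" "is_Aut_pow L F" "symmetric_condition L F"
  shows "\<exists>\<sigma> f g. \<sigma> permutes UNIV \<and> f \<in> End_AV L \<and> g \<in> End_AV L \<and>
    F = mat_comp (perm_mat \<sigma>) (fg_mat f g)"
proof -
  interpret transposition_closed_rows F
    using assms(1,3,4) by (rule symmetric_automorphism_rows)
  have "\<not> CARD('n) \<le> Suc 0"
    using assms(2) by simp
  then obtain a b :: 'n where "a \<noteq> b"
    using card_le_Suc0_iff_eq[of "UNIV :: 'n set"] by auto
  then obtain i where "F i a \<noteq> F i b"
    using is_Aut_pow_columns_differ[OF assms(3)] by blast
  then obtain \<sigma> f g where "\<sigma> permutes UNIV" and F: "\<And>i j. F i j = (if \<sigma> i = j then f else g)"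
    using rows_eq_fg_mat[OF is_Aut_pow_rows_inj[OF assms(3)]] by blast
  have entries: "F i j \<in> End_AV L" for i j
    using assms(3) by (simp add: is_Aut_pow_def is_End_pow_def)
  have "f \<in> End_AV L"
    using entries[of a "\<sigma> a"] by (simp add: F)
  moreover have "g \<in> End_AV L"
    using entries[of a "if \<sigma> a = a then b else a"] \<open>a \<noteq> b\<close> by (simp add: F split: if_splits)
  moreover have "F = mat_comp (perm_mat \<sigma>) (fg_mat f g)"
    by (simp add: fun_eq_iff mat_comp_perm_mat fg_mat_def F)
  ultimately show ?thesis
    using \<open>\<sigma> permutes UNIV\<close> by blast
qed

theorem theorem1p4:
  fixes L :: "(complex^'g::finite) set"
    and F :: "'n::finite \<Rightarrow> 'n \<Rightarrow> complex^'g^'g"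
  assumes "simple_av L"
    and "CARD('n) \<ge> 2"
    and "is_Aut_pow L F"
  shows "symmetric_condition L F \<longleftrightarrow>
    (\<exists>\<sigma> f g. \<sigma> permutes (UNIV :: 'n set) \<and> f \<in> End_AV L \<and> g \<in> End_AV L \<and>
       F = mat_comp (perm_mat \<sigma>) (fg_mat f g))"
  using symmetric_condition_imp_perm_fg[OF assms]
    perm_fg_imp_symmetric_condition[OF simple_av_lattice[OF assms(1)] assms(3)] by blast

end
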